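(* Let $n\le -1$ be an odd integer. In $\mathbb{F}_2[w]$ one has $$q_n(w)\equiv (w+1)^e\,h(w)\pmod 2,$$ where $e=0$ if $3\nmid n$ and $e=2$ if $3\mid n$, and $h\in\mathbb{F}_2[w]$ is a product of pairwise distinct irreducible polynomials each of degree at least $2$ (so $h$ is squarefree and divisible by neither $w$ nor $w+1$).
   Context: Define $q_n\in\mathbb{Z}[w]$ for odd $n\le -1$ by $q_{-1}=w^3-w^2+2w-7$, $q_{-3}=w^5-2w^4-2w^3+5w^2+3w-9$, $q_{-5}=w^7-2w^6-4w^5+8w^4+4w^3-7w^2+2w-7$, and $q_n=(w^2-1)(q_{n+2}-q_{n+4})+q_{n+6}$ for odd $n<-5$. *)

theory Defs
  imports "HOL-Computational_Algebra.Polynomial" "HOL-Library.Z2"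
begin

text \<open>Q k is q_{-(2k+1)}: Q 0 = q_{-1}, Q 1 = q_{-3}, Q 2 = q_{-5}.\<close>
fun Q :: "nat \<Rightarrow> int poly" where
  "Q 0 = [:-7, 2, -1, 1:]"
| "Q (Suc 0) = [:-9, 3, 5, -2, -2, 1:]"
| "Q (Suc (Suc 0)) = [:-7, 2, -7, 4, 8, -4, -2, 1:]"
| "Q (Suc (Suc (Suc k))) =
     [:-1, 0, 1:] * (Q (Suc (Suc k)) - Q (Suc k)) + Q k"

definition q :: "int \<Rightarrow> int poly" where
  "q n = Q (nat ((- n - 1) div 2))"

text \<open>Reduction mod 2 into F_2[w] (F_2 = type bit).\<close>
definition red2 :: "int poly \<Rightarrow> bit poly" where
  "red2 p = map_poly of_int p"

end

theory Submission
  imports Defs "HOL-Computational_Algebra.Squarefree" "HOL-Computational_Algebra.Field_as_Ring"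
    "HOL-Computational_Algebra.Polynomial_Factorial"
begin

(* Reduce mod 2 and work in F_2[w] (type bit poly); write S = 1 + w^2 = (w+1)^2
   and f_k for the reduction of Q k = q_{-(2k+1)}.
   1. Let D_m be the sequence D_0 = 0, D_1 = w, D_(m+2) = w D_(m+1) + D_m (so D_m = w F_m,
      F_m the Fibonacci polynomials).  In characteristic 2 squaring is additive, so the
      squares D_m^2 obey the same third-order recurrence as the f_k; comparing three initial
      values gives the key identity  w f_k = w S + D_(k+2)^2.
   2. Since squares have zero derivative in characteristic 2, differentiating gives
      (w f_k)' = S.  Over any field, h is squarefree as soon as (w h)' = h + w h' is coprime
      to h, because a repeated prime factor of h divides h and h'.  A squarefree h with
      h(0), h(1) /= 0 is the product of its distinct prime factors, none of which is linear,
      since a linear factor would give a root in F_2 = {0, 1}.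
   3. D_m(1) is the Fibonacci number F_m mod 2, which vanishes iff 3 | m, and w S divides
      D_(3M).  If 3 does not divide k+2 (equivalently n), h = f_k works with e = 0, as S is
      coprime to f_k.  Otherwise D_(k+2) = w S g, so f_k = S h with h = 1 + w S g^2, and
      (w h)' = (w + S (w g)^2)' = 1; this gives e = 2. *)


lemma red2_add: "red2 (a + b) = red2 a + red2 b"
  by (rule poly_eqI) (simp add: red2_def coeff_map_poly)

lemma red2_diff: "red2 (a - b) = red2 a - red2 b"
  by (rule poly_eqI) (simp add: red2_def coeff_map_poly)

lemma red2_mult: "red2 (a * b) = red2 a * red2 b"
  by (rule poly_eqI) (simp add: red2_def coeff_map_poly coeff_mult)


section \<open>Arithmetic in characteristic 2\<close>

lemma bit_poly_two [simp]: "(2 :: bit poly) = 0"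
  by (simp add: numeral_poly)

lemma bit_poly_add_self [simp]: "(a :: bit poly) + a = 0"
  by (simp flip: mult_2)

lemma bit_poly_diff_eq_add: "(a :: bit poly) - b = a + b"
  by (rule poly_eqI) simp

lemma bit_poly_square_add: "((a :: bit poly) + b) ^ 2 = a ^ 2 + b ^ 2"
proof -
  have "(a + b) ^ 2 = a ^ 2 + b ^ 2 + (a * b + a * b)"
    by (simp add: power2_eq_square algebra_simps)
  then show ?thesis by simp
qed

lemma pderiv_bit_poly_square: "pderiv ((a :: bit poly) ^ 2) = 0"
  by (simp add: pderiv_mult power2_eq_square flip: mult_2)

lemma pderiv_X_mult: "pderiv ([:0, 1:] * p) = p + [:0, 1:] * pderiv (p :: 'a :: idom poly)"
  by (simp add: pderiv_mult pderiv_pCons)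

abbreviation X :: "bit poly" where "X \<equiv> [:0, 1:]"

text \<open>\<open>S = 1 + w\<^sup>2 = (w + 1)\<^sup>2\<close>, the reduction of the factor \<open>w\<^sup>2 - 1\<close> of the recurrence.\<close>
abbreviation S :: "bit poly" where "S \<equiv> [:1, 0, 1:]"

lemma S_eq: "S = 1 + X ^ 2"
  by (simp add: power2_eq_square one_pCons)

lemma S_eq_square: "S = [:1, 1:] ^ 2"
  by (simp add: power2_eq_square)

lemma pderiv_S: "pderiv S = 0"
  unfolding S_eq_square by (rule pderiv_bit_poly_square)


section \<open>The sequence \<open>D\<^sub>m = w F\<^sub>m\<close> over \<open>F\<^sub>2\<close>\<close>

fun D :: "nat \<Rightarrow> bit poly" where
  "D 0 = 0"
| "D (Suc 0) = X"
| "D (Suc (Suc m)) = X * D (Suc m) + D m"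

declare D.simps(3) [simp del]

lemma D_rec: "D (m + 2) = X * D (m + 1) + D m"
  by (simp add: numeral_2_eq_2 D.simps(3))

lemma D_rec_shift: "D (m + 3) = X * D (m + 2) + D (m + 1)"
  using D_rec [of "m + 1"] by (simp add: numeral_3_eq_3 numeral_2_eq_2)

lemma D_step3: "D (m + 3) = S * D (m + 1) + X * D m"
  unfolding D_rec_shift D_rec S_eq by algebra

text \<open>The squares satisfy the reduction mod 2 of the recurrence of the \<open>q\<^sub>n\<close>.\<close>
lemma D_square_rec: "D (m + 3) ^ 2 = S * (D (m + 2) ^ 2 + D (m + 1) ^ 2) + D m ^ 2"
proof -
  have d3: "D (m + 3) ^ 2 = X ^ 2 * D (m + 2) ^ 2 + D (m + 1) ^ 2"
    unfolding D_rec_shift bit_poly_square_add power_mult_distrib ..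
  have d2: "D (m + 2) ^ 2 = X ^ 2 * D (m + 1) ^ 2 + D m ^ 2"
    unfolding D_rec bit_poly_square_add power_mult_distrib ..
  have "S * (D (m + 2) ^ 2 + D (m + 1) ^ 2) + D m ^ 2
      = X ^ 2 * D (m + 2) ^ 2 + D (m + 1) ^ 2 + (D (m + 2) ^ 2 + (X ^ 2 * D (m + 1) ^ 2 + D m ^ 2))"
    unfolding S_eq by algebra
  also have "\<dots> = D (m + 3) ^ 2"
    unfolding d3 d2 [symmetric] by simp
  finally show ?thesis ..
qed

text \<open>\<open>D\<^sub>m(1)\<close> is the Fibonacci number \<open>F\<^sub>m\<close> modulo 2: it vanishes iff \<open>3 | m\<close>.\<close>
lemma poly_D_1: "poly (D m) 1 = (if 3 dvd m then 0 else 1)"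
proof -
  have periodic: "poly (D (m + 3)) 1 = poly (D m) 1" for m
    by (simp add: D_step3)
  have reduce: "poly (D (3 * j + r)) 1 = poly (D r) 1" for j r
  proof (induction j)
    case (Suc j)
    have "3 * Suc j + r = (3 * j + r) + 3" by simp
    then show ?case by (simp only: periodic Suc.IH)
  qed simp
  have mod3: "poly (D m) 1 = poly (D (m mod 3)) 1"
    using reduce [of "m div 3" "m mod 3"] unfolding mult_div_mod_eq .
  have small: "poly (D r) 1 = (if r = 0 then 0 else 1)" if "r < 3" for r
    using that by (auto simp: numeral_3_eq_3 less_Suc_eq D.simps(3))
  show ?thesis
    unfolding mod3 by (simp add: small dvd_eq_mod_eq_0)
qed

lemma D_step6: "D (m + 6) = X * S * D (m + 3) + D m"
proof -
  have three: "(3 :: bit poly) = 1"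
    by (simp add: numeral_poly)
  have idx: "m + 6 = Suc (Suc (Suc (Suc (Suc (Suc m)))))" "m + 3 = Suc (Suc (Suc m))"
    by simp_all
  have "D (m + 6) = (X ^ 3 + 3 * X) * D (m + 3) + D m"
    unfolding idx D.simps(3) by algebra
  also have "X ^ 3 + 3 * X = X * S"
    unfolding three S_eq by algebra
  finally show ?thesis .
qed

lemma XS_dvd_D: "X * S dvd D (3 * M)"
proof -
  have "X * S dvd D (3 * M) \<and> X * S dvd D (3 * M + 3)"
  proof (induction M)
    case 0
    show ?case by (simp add: numeral_3_eq_3 D.simps(3))
  next
    case (Suc M)
    have "D (3 * Suc M + 3) = X * S * D (3 * M + 3) + D (3 * M)"
      using D_step6 [of "3 * M"] by (simp add: add_ac)
    then have "X * S dvd D (3 * Suc M + 3)"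
      using Suc.IH by (metis dvd_add dvd_triv_left)
    moreover have "X * S dvd D (3 * Suc M)"
      using Suc.IH by (simp add: add_ac)
    ultimately show ?case by blast
  qed
  then show ?thesis ..
qed


section \<open>The key identity \<open>w f\<^sub>k = w S + D\<^sub>k\<^sub>+\<^sub>2\<^sup>2\<close> and its consequences\<close>

lemma third_order_recurrence_unique:
  fixes a b :: "nat \<Rightarrow> 'a" and k :: nat
  assumes rec_a: "\<And>k. a (k + 3) = F (a k) (a (k + 1)) (a (k + 2))"
    and rec_b: "\<And>k. b (k + 3) = F (b k) (b (k + 1)) (b (k + 2))"
    and init: "a 0 = b 0" "a 1 = b 1" "a 2 = b 2"
  shows "a k = b k"
proof (induction k rule: less_induct)
  case (less k)
  show ?case
  proof (cases "k < 3")
    case True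
    then have "k = 0 \<or> k = 1 \<or> k = 2"
      by arith
    with init show ?thesis
      by auto
  next
    case False
    then obtain j where "k = j + 3"
      by (metis add.commute le_add_diff_inverse not_less)
    then show ?thesis
      using less rec_a rec_b by simp
  qed
qed

lemma red2_Q_rec: "red2 (Q (k + 3)) = S * (red2 (Q (k + 2)) + red2 (Q (k + 1))) + red2 (Q k)"
proof -
  have idx: "k + 3 = Suc (Suc (Suc k))" "k + 2 = Suc (Suc k)" "k + 1 = Suc k"
    by simp_all
  have "red2 [:-1, 0, 1:] = S"
    by (simp add: red2_def map_poly_pCons)
  then show ?thesis
    unfolding idx Q.simps red2_add red2_mult red2_diff bit_poly_diff_eq_add by simp
qed

text \<open>The key identity: both sides satisfy the recurrence \<open>a\<^sub>k\<^sub>+\<^sub>3 = S (a\<^sub>k\<^sub>+\<^sub>2 + a\<^sub>k\<^sub>+\<^sub>1) + a\<^sub>k\<close>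
  (the constant \<open>w S\<close> cancels in characteristic 2) and agree for \<open>k = 0, 1, 2\<close>.\<close>
lemma key_identity: "X * red2 (Q k) = X * S + D (k + 2) ^ 2"
proof (rule third_order_recurrence_unique [where a = "\<lambda>k. X * red2 (Q k)"
      and b = "\<lambda>k. X * S + D (k + 2) ^ 2" and F = "\<lambda>x y z. S * (z + y) + x"])
  show "X * red2 (Q (k + 3)) = S * (X * red2 (Q (k + 2)) + X * red2 (Q (k + 1))) + X * red2 (Q k)"
    for k unfolding red2_Q_rec by algebra
  show "X * S + D (k + 3 + 2) ^ 2
      = S * ((X * S + D (k + 2 + 2) ^ 2) + (X * S + D (k + 1 + 2) ^ 2)) + (X * S + D (k + 2) ^ 2)"
    for k
  proof -
    have idx: "k + 3 + 2 = k + 5" "k + 2 + 2 = k + 4" "k + 1 + 2 = k + 3"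
      by simp_all
    have rec: "D (k + 5) ^ 2 = S * (D (k + 4) ^ 2 + D (k + 3) ^ 2) + D (k + 2) ^ 2"
      using D_square_rec [of "k + 2"]
      by (simp only: add.assoc numeral_plus_numeral numeral_plus_one add_num_simps)
    have "S * ((X * S + D (k + 4) ^ 2) + (X * S + D (k + 3) ^ 2)) + (X * S + D (k + 2) ^ 2)
        = X * S + (S * (D (k + 4) ^ 2 + D (k + 3) ^ 2) + D (k + 2) ^ 2) + S * (X * S + X * S)"
      by algebra
    also have "\<dots> = X * S + D (k + 5) ^ 2"
      unfolding rec by simp
    finally show ?thesis
      unfolding idx ..
  qed
qed (simp_all add: red2_def map_poly_pCons power2_eq_square D.simps(3) numeral_2_eq_2)


text \<open>Differentiating the key identity: squares have zero derivative in characteristic 2.\<close>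
lemma pderiv_X_red2_Q: "pderiv (X * red2 (Q k)) = S"
  unfolding key_identity
  by (simp add: pderiv_add pderiv_mult pderiv_S pderiv_bit_poly_square pderiv_pCons)

text \<open>Evaluating the key identity at \<open>1\<close>, where \<open>S\<close> vanishes and squaring is the identity.\<close>
lemma poly_red2_Q_1: "poly (red2 (Q k)) 1 = poly (D (k + 2)) 1"
proof -
  have "poly (X * red2 (Q k)) 1 = poly (X * S + D (k + 2) ^ 2) 1"
    by (simp only: key_identity)
  moreover have "(x :: bit) ^ 2 = x" for x
    by (cases "x = 0") simp_all
  ultimately show ?thesis
    by (simp del: power_bit_unfold mult_bit_eq_and add_bit_eq_xor)
qed

text \<open>Evaluating \<open>f + w f' = S\<close> at \<open>0\<close> gives the constant term of \<open>f\<^sub>k\<close>.\<close>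
lemma poly_red2_Q_0: "poly (red2 (Q k)) 0 = 1"
  using arg_cong [OF pderiv_X_red2_Q [unfolded pderiv_X_mult], of "\<lambda>p. poly p 0"] by simp


section \<open>Squarefreeness and factorization over \<open>F\<^sub>2\<close>\<close>

text \<open>\<open>F\<^sub>2\<close> as a Euclidean ring, so that \<open>F\<^sub>2[w]\<close> becomes a factorial ring with prime
  factorizations (as is done in the library for \<open>\<rat>\<close>, \<open>\<real>\<close> and \<open>\<complex>\<close>).\<close>

instantiation bit ::
  "{unique_euclidean_ring, normalization_euclidean_semiring, normalization_semidom_multiplicative}"
begin
definition [simp]: "normalize_bit = (normalize_field :: bit \<Rightarrow> _)"
definition [simp]: "unit_factor_bit = (unit_factor_field :: bit \<Rightarrow> _)"
definition [simp]: "euclidean_size_bit = (euclidean_size_field :: bit \<Rightarrow> _)"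
definition [simp]: "division_segment (x :: bit) = 1"
instance
  by standard (auto simp: dvd_field_iff)
end

instantiation bit :: euclidean_ring_gcd
begin
definition gcd_bit :: "bit \<Rightarrow> bit \<Rightarrow> bit" where "gcd_bit = Euclidean_Algorithm.gcd"
definition lcm_bit :: "bit \<Rightarrow> bit \<Rightarrow> bit" where "lcm_bit = Euclidean_Algorithm.lcm"
definition Gcd_bit :: "bit set \<Rightarrow> bit" where "Gcd_bit = Euclidean_Algorithm.Gcd"
definition Lcm_bit :: "bit set \<Rightarrow> bit" where "Lcm_bit = Euclidean_Algorithm.Lcm"
instance
  by standard (simp_all add: gcd_bit_def lcm_bit_def Gcd_bit_def Lcm_bit_def)
end

instance bit :: field_gcd ..

text \<open>Over any field, if \<open>(w h)' = h + w h'\<close> is coprime to \<open>h\<close> then \<open>h\<close> is squarefree: a repeated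
  prime factor of \<open>h\<close> divides both \<open>h\<close> and \<open>h'\<close>.\<close>
lemma squarefree_if_coprime_pderiv_X_mult:
  fixes h :: "'a :: field_gcd poly"
  assumes coprime: "coprime (pderiv ([:0, 1:] * h)) h"
  shows "squarefree h"
proof -
  have "h \<noteq> 0"
    using coprime by auto
  moreover have "\<not> p ^ 2 dvd h" if "prime p" for p
  proof
    assume "p ^ 2 dvd h"
    then obtain g where "h = p ^ 2 * g" ..
    then have "h = p * (p * g)"
      by (simp add: power2_eq_square mult.assoc)
    then have "p dvd h" and "p dvd pderiv h"
      by (simp_all add: pderiv_mult)
    then have "p dvd pderiv ([:0, 1:] * h)"
      unfolding pderiv_X_mult by (intro dvd_add dvd_mult)
    with \<open>p dvd h\<close> coprime have "is_unit p"
      using coprime_common_divisor by blast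
    with \<open>prime p\<close> show False
      by simp
  qed
  ultimately show ?thesis
    by (simp add: squarefree_factorial_semiring)
qed

lemma coprime_S:
  assumes "poly h 1 \<noteq> 0"
  shows "coprime S h"
proof -
  have "prime_elem [:1, 1 :: bit:]"
    by (rule prime_elem_linear_field_poly) simp
  moreover have "\<not> [:1, 1:] dvd h"
    using assms by (simp add: dvd_iff_poly_eq_0)
  ultimately have "coprime h ([:1, 1:] ^ 2)"
    by (rule prime_elem_imp_power_coprime)
  then show ?thesis
    unfolding S_eq_square by (simp add: coprime_commute)
qed

lemma squarefree_normalize_eq_prod_prime_factors:
  fixes x :: "'a :: factorial_semiring_multiplicative"
  assumes "squarefree x"
  shows "normalize x = (\<Prod>p\<in>prime_factors x. p)"
proof -
  have "x \<noteq> 0"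
    using assms by auto
  then have "normalize x = (\<Prod>p\<in>prime_factors x. p ^ multiplicity p x)"
    by (simp add: prod_prime_factors)
  also have "\<dots> = (\<Prod>p\<in>prime_factors x. p)"
    using assms \<open>x \<noteq> 0\<close> by (intro prod.cong) (simp_all add: squarefree_factorial_semiring')
  finally show ?thesis .
qed

lemma degree_1_poly_has_root:
  fixes f :: "'a :: field poly"
  assumes "degree f = 1"
  shows "\<exists>x. poly f x = 0"
proof -
  obtain a b where "f = [:b, a:]" and "a \<noteq> 0"
    using assms by (rule degree1_coeffs)
  then have "poly f (- b / a) = 0"
    by simp
  then show ?thesis ..
qed

lemma bit_poly_distinct_nonlinear_factors:
  fixes h :: "bit poly"
  assumes sqf: "squarefree h" and h0: "poly h 0 \<noteq> 0" and h1: "poly h 1 \<noteq> 0"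
  shows "\<exists>F. finite F \<and> h = (\<Prod>f\<in>F. f) \<and> (\<forall>f\<in>F. irreducible f \<and> degree f \<ge> 2)"
proof (intro exI conjI ballI)
  have "h \<noteq> 0"
    using h0 by auto
  then have "normalize h = h"
    by (intro poly_eqI) (simp add: normalize_poly_eq_map_poly coeff_map_poly)
  with sqf show "h = (\<Prod>f\<in>prime_factors h. f)"
    by (simp add: squarefree_normalize_eq_prod_prime_factors)
  fix f assume "f \<in> prime_factors h"
  then have "prime f" and "f dvd h"
    by (auto simp: in_prime_factors_iff)
  then show "irreducible f"
    by (simp add: prime_elem_imp_irreducible)
  have "f \<noteq> 0" and "\<not> is_unit f"
    using \<open>prime f\<close> by auto
  then have "degree f \<noteq> 0"
    using is_unit_iff_degree by blast
  moreover have "degree f \<noteq> 1"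
  proof
    assume "degree f = 1"
    then obtain x where "poly f x = 0"
      using degree_1_poly_has_root by blast
    with \<open>f dvd h\<close> have "poly h x = 0"
      by (auto elim: dvdE)
    moreover have "x = 0 \<or> x = 1"
      by (cases "x = 0") simp_all
    ultimately show False
      using h0 h1 by auto
  qed
  ultimately show "degree f \<ge> 2"
    by simp
qed simp


lemma red2_Q_factorization:
  "\<exists>h. red2 (Q k) = [:1, 1:] ^ (if 3 dvd (k + 2) then 2 else 0) * h \<and>
       squarefree h \<and> poly h 0 \<noteq> 0 \<and> poly h 1 \<noteq> 0"
proof (cases "3 dvd (k + 2)")
  case False
  then have f1: "poly (red2 (Q k)) 1 \<noteq> 0"
    by (simp add: poly_red2_Q_1 poly_D_1)
  then have "coprime (pderiv (X * red2 (Q k))) (red2 (Q k))"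
    unfolding pderiv_X_red2_Q by (rule coprime_S)
  then have "squarefree (red2 (Q k))"
    by (rule squarefree_if_coprime_pderiv_X_mult)
  with f1 False show ?thesis
    by (simp add: poly_red2_Q_0)
next
  case True
  then obtain M where "k + 2 = 3 * M" ..
  with XS_dvd_D obtain g where g: "D (k + 2) = X * S * g"
    by (metis dvdE)
  define h where "h = 1 + X * S * g ^ 2"
  have "X * red2 (Q k) = X * (S * h)"
    unfolding key_identity g h_def by algebra
  then have factor: "red2 (Q k) = S * h"
    by simp
  have "pderiv (X * h) = 1"
  proof -
    have "X * h = X + S * (X * g) ^ 2"
      unfolding h_def by algebra
    then show ?thesis
      by (simp add: pderiv_add pderiv_mult pderiv_S pderiv_bit_poly_square pderiv_pCons)
  qed
  then have "squarefree h"
    by (intro squarefree_if_coprime_pderiv_X_mult) simp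
  moreover have "poly h 0 = 1" and "poly h 1 = 1"
    by (simp_all add: h_def)
  ultimately show ?thesis
    using True factor S_eq_square by auto
qed

theorem proposition4p1:
  fixes n :: int
  assumes "odd n" and "n \<le> -1"
  shows "\<exists>(e::nat) (h::bit poly) (F::bit poly set).
           e = (if 3 dvd n then 2 else 0) \<and>
           red2 (q n) = [:1, 1:] ^ e * h \<and>
           finite F \<and> h = (\<Prod>f\<in>F. f) \<and>
           (\<forall>f\<in>F. irreducible f \<and> degree f \<ge> 2)"
proof -
  define k where "k = nat ((- n - 1) div 2)"
  have qn: "q n = Q k"
    by (simp add: q_def k_def)
  have "n = - 2 * int k - 1"
    using assms unfolding k_def by (auto elim!: oddE)
  then have dvd3: "3 dvd n \<longleftrightarrow> 3 dvd (k + 2)"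
    by presburger
  obtain h where h: "red2 (Q k) = [:1, 1:] ^ (if 3 dvd (k + 2) then 2 else 0) * h"
    and "squarefree h" "poly h 0 \<noteq> 0" "poly h 1 \<noteq> 0"
    using red2_Q_factorization by blast
  then obtain F where "finite F \<and> h = (\<Prod>f\<in>F. f) \<and> (\<forall>f\<in>F. irreducible f \<and> degree f \<ge> 2)"
    using bit_poly_distinct_nonlinear_factors by blast
  then show ?thesis
    using h unfolding qn dvd3 by blast
qed

end
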